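(* Let $d\ge2$ be even, $\mathcal I_d=\{-\tfrac d2,\ldots,\tfrac d2-1\}$, $\mathcal H_d$ with orthonormal basis $\{|j\rangle\}_{j\in\mathcal I_d}$, and let $\mathcal R=G\circ\tilde G\circ G$ be the map on $\mathcal L(\mathcal H_d\otimes\mathcal H_d)$ defined in the context. For $X\in\mathcal L(\mathcal H_d^{\otimes2})$ write $X=\sum_{iji'j'}X^{i'j'}_{ij}|ij\rangle\langle i'j'|$. Then, with all sums over $\mathcal I_d$, $u$ ranging over $\mathcal I_d\setminus\{0\}$ and index additions taken modulo $d$ in $\mathcal I_d$, $\mathcal R(X)=\frac1{d^2}\sum_{u\ne0}\big(\sum_iX^{i,i+u}_{i,i+u}\big)\sum_a|a,a+u\rangle\langle a,a+u|+\frac1{d^2}\sum_{u\ne0}\big(\sum_iX^{i+u,i}_{i,i+u}\big)\sum_a|a,a+u\rangle\langle a+u,a|+\big(\sum_iX^{ii}_{ii}\big)\frac{I+F-E}{d^3}+\big(\frac I{d^2}-\frac{I+F-E}{d^3}\big)\mathrm{Tr}X+\big(\frac F{d^2}-\frac{I+F-E}{d^3}\big)\mathrm{Tr}(FX)$. Moreover, if $X\in\mathcal K$ then $\mathcal R(X)=\sum_{u\ne0}\Big(\frac1{d^2}\sum_iX^{i,i+u}_{i,i+u}+\frac{\sum_iX^{ii}_{ii}}{d^3}\Big)\sum_a|a,a+u\rangle\langle a,a+u|+\sum_{u\ne0}\Big(\frac1{d^2}\sum_iX^{i+u,i}_{i,i+u}+\frac{\sum_iX^{ii}_{ii}}{d^3}\Big)\sum_a|a,a+u\rangle\langle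 a+u,a|+\frac{\sum_iX^{ii}_{ii}}{d^3}E$.
   Context: $|ij\rangle=|i\rangle\otimes|j\rangle$; $\omega^x=e^{2\pi ix/d}$ for real $x$; $\hat Q=\sum_j j|j\rangle\langle j|$; $\widetilde{|k\rangle}=d^{-1/2}\sum_j\omega^{kj}|j\rangle$; $\hat P=\sum_k k\widetilde{|k\rangle}\widetilde{\langle k|}$; $V_{\alpha\beta}=\omega^{\alpha\hat Q+\beta\hat Q^2}$, $\tilde V_{\alpha\beta}=\omega^{\alpha\hat P+\beta\hat P^2}$; $G(X)=\mathbb E_{\alpha\beta}V_{\alpha\beta}^{\otimes2}X(V_{\alpha\beta}^\dagger)^{\otimes2}$, $\tilde G(X)=\mathbb E_{\alpha\beta}\tilde V_{\alpha\beta}^{\otimes2}X(\tilde V_{\alpha\beta}^\dagger)^{\otimes2}$ with $\alpha,\beta$ independent uniform on $[0,d)$. $I=\sum_{ab}|ab\rangle\langle ab|$, $F=\sum_{ab}|ab\rangle\langle ba|$ (swap), $E=\sum_i|ii\rangle\langle ii|$. $\mathcal K$ is the orthogonal complement of $\mathrm{span}\{I,F\}$ in $\mathcal L(\mathcal H_d\otimes\mathcal H_d)$ with respect to the Hilbert–Schmidt inner product $\langle X,Y\rangle=\mathrm{Tr}X^\dagger Y$. *)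

theory Defs
  imports "HOL-Analysis.Analysis"
begin

definition Idx :: "nat \<Rightarrow> int set" where
  "Idx d = {-(int d div 2) ..< int d div 2}"

definition Idx2 :: "nat \<Rightarrow> (int \<times> int) set" where
  "Idx2 d = Idx d \<times> Idx d"

text \<open>Operators on H_d (matrix entries <i|A|j>) and on H_d tensor H_d
  (matrix entries <ij|X|i'j'>, i.e. X (i,j) (i',j') is the coefficient of |ij><i'j'|).\<close>
type_synonym op1 = "int \<Rightarrow> int \<Rightarrow> complex"
type_synonym op2 = "int \<times> int \<Rightarrow> int \<times> int \<Rightarrow> complex"

definition is_op :: "nat \<Rightarrow> op2 \<Rightarrow> bool" where
  "is_op d X = (\<forall>x y. X x y \<noteq> 0 \<longrightarrow> x \<in> Idx2 d \<and> y \<in> Idx2 d)"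

definition omega :: "nat \<Rightarrow> real \<Rightarrow> complex" where
  "omega d x = cis (2 * pi * x / real d)"

text \<open>Addition of indices modulo d, represented in I_d.\<close>
definition wrap :: "nat \<Rightarrow> int \<Rightarrow> int" where
  "wrap d x = (x + int d div 2) mod int d - int d div 2"

definition opmul :: "nat \<Rightarrow> op2 \<Rightarrow> op2 \<Rightarrow> op2" where
  "opmul d A B = (\<lambda>x y. \<Sum>z\<in>Idx2 d. A x z * B z y)"

definition adj :: "op2 \<Rightarrow> op2" where
  "adj A = (\<lambda>x y. cnj (A y x))"

definition tens :: "op1 \<Rightarrow> op1 \<Rightarrow> op2" where
  "tens A B = (\<lambda>x y. A (fst x) (fst y) * B (snd x) (snd y))"

definition Vop :: "nat \<Rightarrow> real \<Rightarrow> real \<Rightarrow> op1" where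
  "Vop d \<alpha> \<beta> = (\<lambda>i j. if i = j \<and> i \<in> Idx d
       then omega d (\<alpha> * of_int i + \<beta> * (of_int i)^2) else 0)"

text \<open>Fourier basis vectors: fket d k j = <j|k~> = d^(-1/2) omega^(k j).\<close>
definition fket :: "nat \<Rightarrow> int \<Rightarrow> int \<Rightarrow> complex" where
  "fket d k j = omega d (of_int (k * j)) / complex_of_real (sqrt (real d))"

definition Vtop :: "nat \<Rightarrow> real \<Rightarrow> real \<Rightarrow> op1" where
  "Vtop d \<alpha> \<beta> = (\<lambda>i j. if i \<in> Idx d \<and> j \<in> Idx d
       then (\<Sum>k\<in>Idx d. omega d (\<alpha> * of_int k + \<beta> * (of_int k)^2) * fket d k i * cnj (fket d k j))
       else 0)"

definition twirl :: "nat \<Rightarrow> op1 \<Rightarrow> op2 \<Rightarrow> op2" where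
  "twirl d U X = opmul d (opmul d (tens U U) X) (adj (tens U U))"

definition Gmap :: "nat \<Rightarrow> op2 \<Rightarrow> op2" where
  "Gmap d X = (\<lambda>x y. integral ({0..<real d} \<times> {0..<real d})
      (\<lambda>p. twirl d (Vop d (fst p) (snd p)) X x y) / (of_nat d)^2)"

definition Gtmap :: "nat \<Rightarrow> op2 \<Rightarrow> op2" where
  "Gtmap d X = (\<lambda>x y. integral ({0..<real d} \<times> {0..<real d})
      (\<lambda>p. twirl d (Vtop d (fst p) (snd p)) X x y) / (of_nat d)^2)"

definition Rmap :: "nat \<Rightarrow> op2 \<Rightarrow> op2" where
  "Rmap d X = Gmap d (Gtmap d (Gmap d X))"

definition ketbra :: "int \<times> int \<Rightarrow> int \<times> int \<Rightarrow> op2" where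
  "ketbra a b = (\<lambda>x y. if x = a \<and> y = b then 1 else 0)"

definition Iop :: "nat \<Rightarrow> op2" where
  "Iop d = (\<lambda>x y. \<Sum>a\<in>Idx d. \<Sum>b\<in>Idx d. ketbra (a,b) (a,b) x y)"

definition Fop :: "nat \<Rightarrow> op2" where
  "Fop d = (\<lambda>x y. \<Sum>a\<in>Idx d. \<Sum>b\<in>Idx d. ketbra (a,b) (b,a) x y)"

definition Eop :: "nat \<Rightarrow> op2" where
  "Eop d = (\<lambda>x y. \<Sum>i\<in>Idx d. ketbra (i,i) (i,i) x y)"

definition tr :: "nat \<Rightarrow> op2 \<Rightarrow> complex" where
  "tr d X = (\<Sum>x\<in>Idx2 d. X x x)"

definition hs :: "nat \<Rightarrow> op2 \<Rightarrow> op2 \<Rightarrow> complex" where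
  "hs d A B = tr d (opmul d (adj A) B)"

definition inK :: "nat \<Rightarrow> op2 \<Rightarrow> bool" where
  "inK d X = (is_op d X \<and> hs d (Iop d) X = 0 \<and> hs d (Fop d) X = 0)"

definition Pdiag :: "nat \<Rightarrow> int \<Rightarrow> op2" where
  "Pdiag d u = (\<lambda>x y. \<Sum>a\<in>Idx d. ketbra (a, wrap d (a+u)) (a, wrap d (a+u)) x y)"

definition Pswap :: "nat \<Rightarrow> int \<Rightarrow> op2" where
  "Pswap d u = (\<lambda>x y. \<Sum>a\<in>Idx d. ketbra (a, wrap d (a+u)) (wrap d (a+u), a) x y)"

end

theory Submission
  imports Defs
begin

text \<open>The twirl \<open>G\<close> multiplies the entry \<open>\<langle>x|X|y\<rangle>\<close> by the phase
  \<open>\<omega>^(\<alpha>(x1 + x2 - y1 - y2) + \<beta>(x1\<^sup>2 + x2\<^sup>2 - y1\<^sup>2 - y2\<^sup>2))\<close>, whose average over \<open>\<alpha>, \<beta>\<close>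
  vanishes unless both exponents do, i.e. unless \<open>y = x\<close> or \<open>y = swap x\<close>. So \<open>G\<close> keeps exactly
  these entries, and the Fourier twirl is \<open>G\<close> conjugated by the Fourier transform. Hence every
  entry of \<open>R(X)\<close> vanishes off \<open>y \<in> {x, swap x}\<close> and is a sum of entries of \<open>G(X)\<close> against a
  kernel, a character sum over \<open>I_d\<^sup>2\<close> that counts solutions of two congruences modulo \<open>d\<close>,
  corrected where identity and swap coincide. Evaluating the kernel gives the formula; on \<open>\<K>\<close>
  both traces vanish and \<open>I + F - E\<close> splits over the projectors onto the shifted diagonals.\<close>

section \<open>Characters and their averages\<close>

lemma omega_add: "omega d a * omega d b = omega d (a + b)"
  unfolding omega_def by (simp add: cis_mult add_divide_distrib distrib_left)

lemma omega_cnj: "cnj (omega d a) = omega d (- a)"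
  unfolding omega_def by (simp add: cis_cnj)

lemma continuous_on_omega [continuous_intros]:
  "continuous_on S f \<Longrightarrow> continuous_on S (\<lambda>x. omega d (f x))"
  unfolding omega_def cis_conv_exp by (cases "d = 0") (simp, intro continuous_intros, auto)

lemma has_integral_omega_linear:
  fixes A :: int
  assumes d: "d > 0"
  shows "((\<lambda>t. omega d (t * of_int A)) has_integral (if A = 0 then real d else 0)) {0..real d}"
proof (cases "A = 0")
  case True
  then show ?thesis
    using has_integral_const_real[of "1::complex" 0 "real d"] d by (simp add: omega_def scaleR_conv_of_real)
next
  case False
  define k where "k = 2 * pi * of_int A / real d"
  have "k \<noteq> 0" using False d by (simp add: k_def)
  define F where "F t = exp (\<i> * complex_of_real (k * t)) / (\<i> * k)" for t
  have "(F has_vector_derivative omega d (t * of_int A)) (at t within {0..real d})" for t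
  proof -
    have "((\<lambda>z. exp (\<i> * complex_of_real k * z) / (\<i> * k)) has_field_derivative
        exp (\<i> * complex_of_real k * of_real t)) (at (of_real t))"
      using \<open>k \<noteq> 0\<close> by (auto intro!: derivative_eq_intros)
    from has_vector_derivative_real_field[OF this] show ?thesis
      unfolding F_def omega_def k_def by (simp add: cis_conv_exp mult_ac)
  qed
  then have "((\<lambda>t. omega d (t * of_int A)) has_integral (F (real d) - F 0)) {0..real d}"
    using d by (intro fundamental_theorem_of_calculus) auto
  moreover have "F (real d) = F 0"
    using d by (simp add: F_def k_def cis_conv_exp[symmetric] mult_ac cis_multiple_2pi)
  ultimately show ?thesis using False by simp
qed

lemma has_integral_closed_to_half_open_box:
  fixes f :: "real \<times> real \<Rightarrow> 'b::banach"
  assumes "(f has_integral I) ({a..b} \<times> {c..e})"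
  shows "(f has_integral I) ({a..<b} \<times> {c..<e})"
proof -
  have "negligible ({p. p \<bullet> (1::real, 0::real) = b} \<union> {p. p \<bullet> (0::real, 1::real) = e})"
    by (intro negligible_Un negligible_standard_hyperplane) (auto simp: Basis_prod_def Basis_real_def intro!: image_eqI)
  then have N: "negligible ({a..b} \<times> {c..e} - {a..<b} \<times> {c..<e})"
    by (rule negligible_subset) (auto simp: inner_prod_def)
  have "(f has_integral I) ({a..b} \<times> {c..e}) \<longleftrightarrow> (f has_integral I) ({a..<b} \<times> {c..<e})"
  proof (rule has_integral_spike_set_eq)
    show "negligible {x \<in> {a..b} \<times> {c..e} - {a..<b} \<times> {c..<e}. f x \<noteq> 0}"
      using N by (rule negligible_subset) blast
    show "negligible {x \<in> {a..<b} \<times> {c..<e} - {a..b} \<times> {c..e}. f x \<noteq> 0}"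
      by (rule negligible_subset[OF negligible_empty]) auto
  qed
  with assms show ?thesis by blast
qed

lemma has_integral_omega_bilinear:
  fixes A B :: int
  assumes d: "d > 0"
  shows "((\<lambda>p. omega d (fst p * of_int A + snd p * of_int B)) has_integral
           (if A = 0 \<and> B = 0 then (of_nat d)^2 else 0)) ({0..<real d} \<times> {0..<real d})"
proof (rule has_integral_closed_to_half_open_box)
  let ?f = "\<lambda>p::real \<times> real. omega d (fst p * of_int A + snd p * of_int B)"
  have cont: "continuous_on (cbox (0, 0) (real d, real d)) ?f"
    by (intro continuous_intros)
  have "integral (cbox (0, 0) (real d, real d)) ?f
      = integral (cbox 0 (real d)) (\<lambda>s. integral (cbox 0 (real d)) (\<lambda>t. ?f (s, t)))"
    by (rule integral_prod_continuous[OF cont])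
  also have "\<dots> = integral {0..real d}
      (\<lambda>s. omega d (s * of_int A) * integral {0..real d} (\<lambda>t. omega d (t * of_int B)))"
    by (simp add: omega_add[symmetric])
  also have "\<dots> = (if A = 0 \<and> B = 0 then (of_nat d)^2 else 0)"
    using integral_unique[OF has_integral_omega_linear[OF d]]
    by (simp add: integral_mult_left power2_eq_square)
  finally have "(?f has_integral (if A = 0 \<and> B = 0 then (of_nat d)^2 else 0)) (cbox (0, 0) (real d, real d))"
    using integrable_continuous[OF cont, THEN integrable_integral] by simp
  then show "(?f has_integral (if A = 0 \<and> B = 0 then (of_nat d)^2 else 0)) ({0..real d} \<times> {0..real d})"
    by (simp add: cbox_Pair_eq)
qed

definition omega_int :: "nat \<Rightarrow> int \<Rightarrow> complex" where
  "omega_int d n = omega d (of_int n)"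

lemma omega_int_add: "omega_int d a * omega_int d b = omega_int d (a + b)"
  unfolding omega_int_def by (simp add: omega_add)

lemma omega_int_cnj: "cnj (omega_int d a) = omega_int d (- a)"
  unfolding omega_int_def by (simp add: omega_cnj)

lemma omega_int_power: "omega_int d t ^ n = omega_int d (int n * t)"
  unfolding omega_int_def omega_def by (simp add: Complex.DeMoivre algebra_simps)

lemma omega_int_eq_1_iff:
  assumes "d > 0"
  shows "omega_int d t = 1 \<longleftrightarrow> int d dvd t"
proof -
  have "omega_int d t = 1 \<longleftrightarrow> (\<exists>n::int. 2 * pi * of_int t / real d = of_int (2 * n) * pi)"
    unfolding omega_int_def omega_def cis_conv_exp by (simp add: exp_eq_1)
  also have "\<dots> \<longleftrightarrow> (\<exists>n::int. of_int t = of_int n * real d)"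
    using assms by (simp add: field_simps)
  also have "\<dots> \<longleftrightarrow> (\<exists>n::int. t = n * int d)"
    by (metis of_int_eq_iff of_int_mult of_int_of_nat_eq)
  finally show ?thesis by (auto simp: dvd_def mult.commute)
qed

section \<open>Indices modulo d\<close>

lemma sum_delta_and:
  "finite S \<Longrightarrow> (\<Sum>k\<in>S. if k = a \<and> P k then f k else 0) = (if a \<in> S \<and> P a then f a else 0)"
  by (induction S rule: finite_induct) auto

lemma finite_Idx [simp]: "finite (Idx d)"
  by (simp add: Idx_def)

lemma finite_Idx2 [simp]: "finite (Idx2 d)"
  by (simp add: Idx2_def)

lemma card_Idx: "even d \<Longrightarrow> card (Idx d) = d"
  unfolding Idx_def by auto

lemma sum_Idx_eq_shift:
  assumes "even d"
  shows "(\<Sum>j\<in>Idx d. g j) = (\<Sum>i<d. g (int i - int d div 2))"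
  unfolding Idx_def
  by (rule sum.reindex_bij_witness[of _ "\<lambda>i. int i - int d div 2" "\<lambda>j. nat (j + int d div 2)"])
     (use assms in auto)

lemma sum_Idx2: "(\<Sum>k\<in>Idx2 d. f k) = (\<Sum>i\<in>Idx d. \<Sum>j\<in>Idx d. f (i, j))"
  unfolding Idx2_def by (simp add: sum.cartesian_product)

lemma zero_in_Idx: "even d \<Longrightarrow> d > 0 \<Longrightarrow> 0 \<in> Idx d"
  unfolding Idx_def by auto

lemma wrap_in_Idx: "even d \<Longrightarrow> d > 0 \<Longrightarrow> wrap d t \<in> Idx d"
  unfolding wrap_def Idx_def by (auto simp: pos_mod_bound)

lemma eq_wrap_iff_dvd:
  assumes "even d" "v \<in> Idx d"
  shows "v = wrap d t \<longleftrightarrow> int d dvd (v - t)"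
proof -
  have "v + int d div 2 = (v + int d div 2) mod int d"
    using assms unfolding Idx_def by auto
  then have "v = wrap d t \<longleftrightarrow> (v + int d div 2) mod int d = (t + int d div 2) mod int d"
    unfolding wrap_def by auto
  also have "\<dots> \<longleftrightarrow> int d dvd (v - t)"
    by (simp add: mod_eq_dvd_iff)
  finally show ?thesis .
qed

lemma dvd_diff_Idx_iff:
  assumes "even d" "i \<in> Idx d" "j \<in> Idx d"
  shows "int d dvd (i - j) \<longleftrightarrow> i = j"
  using eq_wrap_iff_dvd[OF assms(1,3), of j] eq_wrap_iff_dvd[OF assms(1,2), of j] by simp

lemma wrap_add_wrap: "wrap d (a + wrap d b) = wrap d (a + b)"
proof -
  let ?m = "int d div 2"
  have "a + wrap d b + ?m = a + (b + ?m) mod int d"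
    unfolding wrap_def by simp
  then have "(a + wrap d b + ?m) mod int d = (a + b + ?m) mod int d"
    by (simp add: mod_add_right_eq add.assoc)
  then show ?thesis
    unfolding wrap_def[of d "a + wrap d b"] wrap_def[of d "a + b"] by (rule arg_cong[where f = "\<lambda>t. t - ?m"])
qed

lemma mem_Idx2_if_snd_eq_wrap:
  "even d \<Longrightarrow> d > 0 \<Longrightarrow> fst x \<in> Idx d \<Longrightarrow> snd x = wrap d t \<Longrightarrow> x \<in> Idx2 d"
  using wrap_in_Idx by (cases x) (auto simp: Idx2_def)

lemma eq_wrap_add_iff:
  assumes "even d" "j \<in> Idx d" "u \<in> Idx d"
  shows "j = wrap d (i + u) \<longleftrightarrow> u = wrap d (j - i)"
proof -
  have "j - (i + u) = - (u - (j - i))" by simp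
  then show ?thesis
    using eq_wrap_iff_dvd[OF assms(1,2)] eq_wrap_iff_dvd[OF assms(1,3)] by (metis dvd_minus_iff)
qed

lemma wrap_diff_eq_0_iff:
  assumes "even d" "d > 0" "i \<in> Idx d" "j \<in> Idx d"
  shows "wrap d (j - i) = 0 \<longleftrightarrow> i = j"
  using eq_wrap_iff_dvd[OF assms(1) zero_in_Idx[OF assms(1,2)], of "j - i"] dvd_diff_Idx_iff[OF assms(1,3,4)]
  by auto

lemma sum_Idx_wrap_eq_sum_Idx2:
  assumes "even d" "d > 0"
  shows "(\<Sum>i\<in>Idx d. f (i, wrap d (i + v))) = (\<Sum>w\<in>Idx2 d. if int d dvd snd w - fst w - v then f w else 0)"
proof -
  have "(\<Sum>w\<in>Idx2 d. if int d dvd snd w - fst w - v then f w else 0)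
      = (\<Sum>i\<in>Idx d. \<Sum>j\<in>Idx d. if j = wrap d (i + v) then f (i, j) else 0)"
    unfolding sum_Idx2 by (intro sum.cong refl) (simp add: eq_wrap_iff_dvd[OF assms(1)] diff_diff_eq)
  then show ?thesis
    using wrap_in_Idx[OF assms] by simp
qed

lemma sum_Idx_diagonal: "(\<Sum>i\<in>Idx d. f (i, i)) = (\<Sum>w\<in>Idx2 d. if fst w = snd w then f w else 0)"
  unfolding sum_Idx2 by (intro sum.cong refl) (simp add: sum.delta')

lemma swap_in_Idx2_iff [simp]: "prod.swap x \<in> Idx2 d \<longleftrightarrow> x \<in> Idx2 d"
  by (cases x) (auto simp: Idx2_def)

lemma swap_eq_self_iff: "prod.swap x = x \<longleftrightarrow> fst x = snd x" "x = prod.swap x \<longleftrightarrow> fst x = snd x"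
  by (cases x; auto)+

lemma sum_omega_int_Idx:
  assumes "even d" "d > 0"
  shows "(\<Sum>j\<in>Idx d. omega_int d (j * t)) = (if int d dvd t then of_nat d else 0)"
proof (cases "int d dvd t")
  case True
  then have "omega_int d (j * t) = 1" for j
    using omega_int_eq_1_iff[OF \<open>d > 0\<close>] by simp
  then show ?thesis
    using True card_Idx[OF \<open>even d\<close>] by simp
next
  case False
  have "omega_int d t \<noteq> 1" "omega_int d t ^ d = 1"
    using False omega_int_eq_1_iff[OF \<open>d > 0\<close>] by (simp_all add: omega_int_power)
  then have "(\<Sum>i<d. omega_int d t ^ i) = 0"
    by (simp add: sum_gp_strict)
  moreover have "(\<Sum>j\<in>Idx d. omega_int d (j * t))
      = omega_int d (- (int d div 2) * t) * (\<Sum>i<d. omega_int d t ^ i)"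
    unfolding sum_Idx_eq_shift[OF \<open>even d\<close>] sum_distrib_left omega_int_power omega_int_add
    by (simp add: algebra_simps)
  ultimately show ?thesis using False by simp
qed

lemma sum_Idx2_ketbra:
  "(\<Sum>a\<in>Idx d. \<Sum>b\<in>Idx d. ketbra (a, b) (g (a, b)) x y) = of_bool (x \<in> Idx2 d \<and> y = g x)"
proof -
  have "(\<Sum>a\<in>Idx d. \<Sum>b\<in>Idx d. ketbra (a, b) (g (a, b)) x y) = (\<Sum>k\<in>Idx2 d. if k = x \<and> y = g k then 1 else 0)"
    unfolding ketbra_def sum_Idx2 by (intro sum.cong refl) auto
  then show ?thesis by (simp add: sum_delta_and)
qed

lemma Iop_apply: "Iop d x y = of_bool (x \<in> Idx2 d \<and> y = x)"
  unfolding Iop_def using sum_Idx2_ketbra[where g = "\<lambda>k. k"] by simp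

lemma Fop_apply: "Fop d x y = of_bool (x \<in> Idx2 d \<and> y = prod.swap x)"
  unfolding Fop_def using sum_Idx2_ketbra[where g = prod.swap] by simp

lemma Eop_apply: "Eop d x y = of_bool (x \<in> Idx2 d \<and> fst x = snd x \<and> y = x)"
proof -
  have "Eop d x y = (\<Sum>i\<in>Idx d. if i = fst x \<and> (fst x = snd x \<and> y = x) then 1 else 0)"
    unfolding Eop_def ketbra_def by (intro sum.cong refl) (cases x; auto)
  then show ?thesis by (cases x) (auto simp: sum_delta_and Idx2_def)
qed

lemma Pdiag_apply: "Pdiag d u x y = of_bool (fst x \<in> Idx d \<and> snd x = wrap d (fst x + u) \<and> y = x)"
proof -
  have "Pdiag d u x y = (\<Sum>a\<in>Idx d. if a = fst x \<and> (snd x = wrap d (fst x + u) \<and> y = x) then 1 else 0)"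
    unfolding Pdiag_def ketbra_def by (intro sum.cong refl) (cases x; auto)
  then show ?thesis by (simp add: sum_delta_and)
qed

lemma Pswap_apply:
  "Pswap d u x y = of_bool (fst x \<in> Idx d \<and> snd x = wrap d (fst x + u) \<and> y = prod.swap x)"
proof -
  have "Pswap d u x y = (\<Sum>a\<in>Idx d. if a = fst x \<and> (snd x = wrap d (fst x + u) \<and> y = prod.swap x) then 1 else 0)"
    unfolding Pswap_def ketbra_def by (intro sum.cong refl) (cases x; auto)
  then show ?thesis by (simp add: sum_delta_and)
qed

lemma tr_Fop_mult: "tr d (opmul d (Fop d) X) = (\<Sum>w\<in>Idx2 d. X w (prod.swap w))"
proof -
  have "tr d (opmul d (Fop d) X) = (\<Sum>x\<in>Idx2 d. X (prod.swap x) x)"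
    unfolding tr_def opmul_def Fop_apply by (simp add: if_distrib if_distribR sum.delta cong: if_cong)
  also have "\<dots> = (\<Sum>w\<in>Idx2 d. X w (prod.swap w))"
    by (rule sum.reindex_bij_witness[of _ prod.swap prod.swap]) auto
  finally show ?thesis .
qed

lemma hs_Iop: "hs d (Iop d) X = tr d X"
proof -
  have "hs d (Iop d) X = (\<Sum>x\<in>Idx2 d. \<Sum>z\<in>Idx2 d. if z = x then X z x else 0)"
    unfolding hs_def tr_def opmul_def adj_def Iop_apply by (intro sum.cong refl) auto
  then show ?thesis unfolding tr_def by simp
qed

lemma hs_Fop: "hs d (Fop d) X = tr d (opmul d (Fop d) X)"
  unfolding hs_def tr_def opmul_def adj_def Fop_apply by (intro sum.cong refl) auto

lemma sum_shift_indicator: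
  fixes f :: "int \<Rightarrow> 'a::semiring_1"
  assumes "even d" "d > 0" "x \<in> Idx2 d"
  shows "(\<Sum>u\<in>Idx d - {0}. f u * of_bool (fst x \<in> Idx d \<and> snd x = wrap d (fst x + u) \<and> Q))
    = of_bool (Q \<and> fst x \<noteq> snd x) * f (wrap d (snd x - fst x))"
proof -
  have x: "fst x \<in> Idx d" "snd x \<in> Idx d"
    using assms(3) by (auto simp: Idx2_def)
  have "(\<Sum>u\<in>Idx d - {0}. f u * of_bool (fst x \<in> Idx d \<and> snd x = wrap d (fst x + u) \<and> Q))
      = (\<Sum>u\<in>Idx d - {0}. if u = wrap d (snd x - fst x) \<and> Q then f u else 0)"
    using x by (intro sum.cong refl) (auto simp: eq_wrap_add_iff[OF assms(1)])
  also have "\<dots> = of_bool (Q \<and> fst x \<noteq> snd x) * f (wrap d (snd x - fst x))"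
    using x wrap_in_Idx[OF assms(1,2)] wrap_diff_eq_0_iff[OF assms(1,2) x] by (auto simp: sum_delta_and)
  finally show ?thesis .
qed

lemma sum_mult_Pdiag:
  assumes "even d" "d > 0" "x \<in> Idx2 d"
  shows "(\<Sum>u\<in>Idx d - {0}. f u * Pdiag d u x y) = of_bool (y = x \<and> fst x \<noteq> snd x) * f (wrap d (snd x - fst x))"
  unfolding Pdiag_apply by (rule sum_shift_indicator[OF assms])

lemma sum_mult_Pswap:
  assumes "even d" "d > 0" "x \<in> Idx2 d"
  shows "(\<Sum>u\<in>Idx d - {0}. f u * Pswap d u x y)
    = of_bool (y = prod.swap x \<and> fst x \<noteq> snd x) * f (wrap d (snd x - fst x))"
  unfolding Pswap_apply by (rule sum_shift_indicator[OF assms])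

lemma sum_Pdiag_Pswap_Eop:
  assumes "even d" "d > 0"
  shows "(\<Sum>u\<in>Idx d - {0}. Pdiag d u x y) + (\<Sum>u\<in>Idx d - {0}. Pswap d u x y) + Eop d x y
    = Iop d x y + Fop d x y - Eop d x y"
proof (cases "x \<in> Idx2 d")
  case True
  then show ?thesis
    using sum_mult_Pdiag[OF assms True, of "\<lambda>_. 1"] sum_mult_Pswap[OF assms True, of "\<lambda>_. 1"]
    by (auto simp: Iop_apply Fop_apply Eop_apply swap_eq_self_iff)
next
  case False
  then have "Pdiag d u x y = 0" "Pswap d u x y = 0" for u
    using mem_Idx2_if_snd_eq_wrap[OF assms, of x] by (auto simp: Pdiag_apply Pswap_apply)
  then show ?thesis
    using False by (simp add: Iop_apply Fop_apply Eop_apply)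
qed

section \<open>The twirl G\<close>

lemma sum_eq_and_sum_squares_eq_iff:
  fixes x1 x2 y1 y2 :: "'a::{idom,ring_char_0}"
  shows "x1 + x2 = y1 + y2 \<and> x1^2 + x2^2 = y1^2 + y2^2 \<longleftrightarrow> (y1 = x1 \<and> y2 = x2) \<or> (y1 = x2 \<and> y2 = x1)"
proof
  assume eqs: "x1 + x2 = y1 + y2 \<and> x1^2 + x2^2 = y1^2 + y2^2"
  define t where "t = x1 - y1"
  have y1: "y1 = x1 - t" and y2: "y2 = x2 + t"
    using eqs by (simp_all add: t_def algebra_simps)
  have "2 * (t * (x2 - x1 + t)) = 0"
    using eqs unfolding y1 y2 by (simp add: power2_eq_square algebra_simps)
  then have "t = 0 \<or> t = x1 - x2" by (auto simp: add_eq_0_iff)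
  then show "(y1 = x1 \<and> y2 = x2) \<or> (y1 = x2 \<and> y2 = x1)" using y1 y2 by auto
qed auto

definition diag_swap_part :: "nat \<Rightarrow> op2 \<Rightarrow> op2" where
  "diag_swap_part d Y = (\<lambda>x y. if x \<in> Idx2 d \<and> y \<in> Idx2 d \<and> (y = x \<or> y = prod.swap x) then Y x y else 0)"

lemma twirl_diagonal_apply:
  "twirl d (\<lambda>i j. if i = j \<and> i \<in> Idx d then c i else 0) X x y =
    (if x \<in> Idx2 d \<and> y \<in> Idx2 d then c (fst x) * c (snd x) * X x y * cnj (c (fst y) * c (snd y)) else 0)"
proof -
  let ?U = "\<lambda>i j. if i = j \<and> i \<in> Idx d then c i else 0"
  have U: "tens ?U ?U x w = (if w = x \<and> x \<in> Idx2 d then c (fst x) * c (snd x) else 0)" for x w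
    by (cases x; cases w) (auto simp: tens_def Idx2_def)
  have [simp]: "(if P then a else 0) * b = (if P then a * b else 0)"
    "b * (if P then a else 0) = (if P then b * a else 0)"
    "cnj (if P then a else 0) = (if P then cnj a else 0)" for P and a b :: complex
    by simp_all
  have "twirl d ?U X x y = (\<Sum>z\<in>Idx2 d. (\<Sum>w\<in>Idx2 d. tens ?U ?U x w * X w z) * cnj (tens ?U ?U y z))"
    by (simp add: twirl_def opmul_def adj_def)
  also have "\<dots> = (\<Sum>z\<in>Idx2 d. (if x \<in> Idx2 d then c (fst x) * c (snd x) * X x z else 0)
      * (if z = y \<and> y \<in> Idx2 d then cnj (c (fst y) * c (snd y)) else 0))"
    unfolding U by (simp add: sum_delta_and)
  finally show ?thesis
    by (simp add: sum_delta_and)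
qed

lemma twirl_Vop_apply:
  "twirl d (Vop d a b) X x y = (if x \<in> Idx2 d \<and> y \<in> Idx2 d then X x y *
     omega d (a * of_int (fst x + snd x - fst y - snd y) + b * of_int ((fst x)^2 + (snd x)^2 - (fst y)^2 - (snd y)^2))
   else 0)"
proof -
  define c where "c i = omega d (a * of_int i + b * (of_int i)^2)" for i :: int
  have phase: "c i * c j * Z * cnj (c k * c l)
      = Z * omega d (a * of_int (i + j - k - l) + b * of_int (i^2 + j^2 - k^2 - l^2))" for i j k l Z
  proof -
    have "c i * c j * cnj (c k * c l) = omega d (a * of_int (i + j - k - l) + b * of_int (i^2 + j^2 - k^2 - l^2))"
      unfolding c_def complex_cnj_mult omega_cnj omega_add by (simp add: algebra_simps)
    then show ?thesis by (simp add: mult_ac)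
  qed
  have Vop_eq: "Vop d a b = (\<lambda>i j. if i = j \<and> i \<in> Idx d then c i else 0)"
    unfolding Vop_def c_def by (intro ext) auto
  show ?thesis
    unfolding Vop_eq twirl_diagonal_apply phase ..
qed

lemma has_integral_twirl_Vop:
  assumes "d > 0"
  shows "((\<lambda>p. twirl d (Vop d (fst p) (snd p)) Y x y) has_integral (of_nat d)^2 * diag_swap_part d Y x y)
           ({0..<real d} \<times> {0..<real d})"
proof (cases "x \<in> Idx2 d \<and> y \<in> Idx2 d")
  case True
  let ?A = "fst x + snd x - fst y - snd y" and ?B = "(fst x)^2 + (snd x)^2 - (fst y)^2 - (snd y)^2"
  have "?A = 0 \<and> ?B = 0 \<longleftrightarrow> y = x \<or> y = prod.swap x"
    using sum_eq_and_sum_squares_eq_iff[of "fst x" "snd x" "fst y" "snd y"]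
    by (cases x; cases y) (auto simp: algebra_simps)
  then have integral_eq: "Y x y * (if ?A = 0 \<and> ?B = 0 then (of_nat d)^2 else 0) = (of_nat d)^2 * diag_swap_part d Y x y"
    using True by (simp add: diag_swap_part_def)
  have integrand: "(\<lambda>p. twirl d (Vop d (fst p) (snd p)) Y x y)
      = (\<lambda>p. Y x y * omega d (fst p * of_int ?A + snd p * of_int ?B))"
    using True by (simp add: twirl_Vop_apply)
  show ?thesis
    using has_integral_mult_right[OF has_integral_omega_bilinear[OF assms, of ?A ?B], of "Y x y"]
    unfolding integral_eq integrand .
qed (auto simp: twirl_Vop_apply diag_swap_part_def)

lemma Gmap_eq_diag_swap_part: "d > 0 \<Longrightarrow> Gmap d Y = diag_swap_part d Y"
  unfolding Gmap_def by (simp add: integral_unique[OF has_integral_twirl_Vop])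

section \<open>The Fourier twirl\<close>

definition fourier :: "nat \<Rightarrow> op1" where
  "fourier d i k = (if i \<in> Idx d \<and> k \<in> Idx d then fket d k i else 0)"

definition opmul1 :: "nat \<Rightarrow> op1 \<Rightarrow> op1 \<Rightarrow> op1" where
  "opmul1 d A B = (\<lambda>i j. \<Sum>k\<in>Idx d. A i k * B k j)"

definition adj1 :: "op1 \<Rightarrow> op1" where
  "adj1 A = (\<lambda>i j. cnj (A j i))"

lemma Vtop_eq_fourier_conj: "Vtop d a b = opmul1 d (opmul1 d (fourier d) (Vop d a b)) (adj1 (fourier d))"
proof (intro ext)
  fix i j
  have "opmul1 d (opmul1 d (fourier d) (Vop d a b)) (adj1 (fourier d)) i j
      = (\<Sum>l\<in>Idx d. (\<Sum>k\<in>Idx d. if k = l then fourier d i l * omega d (a * of_int l + b * (of_int l)^2) else 0)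
          * cnj (fourier d j l))"
    unfolding opmul1_def adj1_def Vop_def by (intro sum.cong refl arg_cong2[where f = "(*)"]) auto
  also have "\<dots> = Vtop d a b i j"
    unfolding Vtop_def fourier_def by (auto intro!: sum.cong simp: mult_ac)
  finally show "Vtop d a b i j = opmul1 d (opmul1 d (fourier d) (Vop d a b)) (adj1 (fourier d)) i j" ..
qed

lemma tens_opmul1: "tens (opmul1 d A B) (opmul1 d C D) = opmul d (tens A C) (tens B D)"
  unfolding tens_def opmul1_def opmul_def Idx2_def
  by (intro ext) (simp add: sum_product sum.cartesian_product mult_ac case_prod_beta)

lemma adj_tens: "adj (tens A B) = tens (adj1 A) (adj1 B)"
  unfolding adj_def tens_def adj1_def by auto

lemma opmul_assoc: "opmul d (opmul d A B) C = opmul d A (opmul d B C)"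
  unfolding opmul_def
  by (intro ext) (simp add: sum_distrib_left sum_distrib_right mult.assoc, rule sum.swap)

lemma adj_opmul: "adj (opmul d A B) = opmul d (adj B) (adj A)"
  unfolding adj_def opmul_def by (auto intro!: ext simp: mult.commute)

lemma adj_adj [simp]: "adj (adj A) = A"
  unfolding adj_def by auto

abbreviation fourier2 :: "nat \<Rightarrow> op2" where
  "fourier2 d \<equiv> tens (fourier d) (fourier d)"

lemma twirl_Vtop:
  "twirl d (Vtop d a b) X
    = opmul d (opmul d (fourier2 d) (twirl d (Vop d a b) (opmul d (opmul d (adj (fourier2 d)) X) (fourier2 d))))
        (adj (fourier2 d))"
proof -
  have "tens (Vtop d a b) (Vtop d a b)
      = opmul d (opmul d (fourier2 d) (tens (Vop d a b) (Vop d a b))) (adj (fourier2 d))"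
    unfolding Vtop_eq_fourier_conj tens_opmul1 adj_tens ..
  then show ?thesis
    unfolding twirl_def by (simp add: adj_opmul opmul_assoc)
qed

lemma Gtmap_eq_fourier_conj:
  assumes "d > 0"
  shows "Gtmap d X
    = opmul d (opmul d (fourier2 d) (diag_swap_part d (opmul d (opmul d (adj (fourier2 d)) X) (fourier2 d))))
        (adj (fourier2 d))"
proof (intro ext)
  fix x y
  let ?Y = "opmul d (opmul d (adj (fourier2 d)) X) (fourier2 d)"
  have "((\<lambda>p. \<Sum>z\<in>Idx2 d. (\<Sum>w\<in>Idx2 d. fourier2 d x w * twirl d (Vop d (fst p) (snd p)) ?Y w z) * adj (fourier2 d) z y)
      has_integral
       (\<Sum>z\<in>Idx2 d. (\<Sum>w\<in>Idx2 d. fourier2 d x w * ((of_nat d)^2 * diag_swap_part d ?Y w z)) * adj (fourier2 d) z y))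
      ({0..<real d} \<times> {0..<real d})"
    by (intro has_integral_sum finite_Idx2 has_integral_mult_left has_integral_mult_right
        has_integral_twirl_Vop[OF assms])
  also have "(\<Sum>z\<in>Idx2 d. (\<Sum>w\<in>Idx2 d. fourier2 d x w * ((of_nat d)^2 * diag_swap_part d ?Y w z)) * adj (fourier2 d) z y)
      = (of_nat d)^2 * opmul d (opmul d (fourier2 d) (diag_swap_part d ?Y)) (adj (fourier2 d)) x y"
    unfolding opmul_def by (simp add: sum_distrib_left sum_distrib_right mult_ac)
  finally show "Gtmap d X x y = opmul d (opmul d (fourier2 d) (diag_swap_part d ?Y)) (adj (fourier2 d)) x y"
    unfolding Gtmap_def twirl_Vtop using assms by (simp add: opmul_def integral_unique)
qed

section \<open>The kernel of R\<close>

text \<open>Summing the phases over \<open>l \<in> {k, prod.swap k}\<close>: the diagonal term \<open>l = k\<close>, the swapped term,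
  minus the terms counted twice, where \<open>k = prod.swap k\<close>.\<close>

definition twirl_kernel :: "nat \<Rightarrow> int \<Rightarrow> int \<Rightarrow> int \<Rightarrow> int \<Rightarrow> complex" where
  "twirl_kernel d a1 a2 b1 b2 =
     (of_nat d)^2 * of_bool (int d dvd a1 - b1 \<and> int d dvd a2 - b2)
   + (of_nat d)^2 * of_bool (int d dvd a1 - b2 \<and> int d dvd a2 - b1)
   - of_nat d * of_bool (int d dvd a1 + a2 - b1 - b2)"

lemma sum_if_eq_or_eq:
  fixes g :: "_ \<Rightarrow> 'b::comm_ring_1"
  assumes "finite S" "k \<in> S" "k' \<in> S"
  shows "(\<Sum>l\<in>S. if l = k \<or> l = k' then g l else 0) = g k + g k' - (if k' = k then g k else 0)"
proof -
  have "(\<Sum>l\<in>S. if l = k \<or> l = k' then g l else 0)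
      = (\<Sum>l\<in>S. (if l = k then g l else 0) + (if l = k' \<and> k' \<noteq> k then g l else 0))"
    by (rule sum.cong) auto
  then show ?thesis
    using assms by (simp add: sum.distrib sum_delta_and)
qed

lemma sum_diag_swap_omega_int:
  assumes "even d" "d > 0"
  shows "(\<Sum>l\<in>Idx2 d. \<Sum>k\<in>Idx2 d. if l = k \<or> l = prod.swap k
            then omega_int d (fst k * a1 + snd k * a2 - fst l * b1 - snd l * b2) else 0)
     = twirl_kernel d a1 a2 b1 b2"
proof -
  let ?g = "\<lambda>k l. omega_int d (fst k * a1 + snd k * a2 - fst l * b1 - snd l * b2)"
  have "(\<Sum>l\<in>Idx2 d. \<Sum>k\<in>Idx2 d. if l = k \<or> l = prod.swap k then ?g k l else 0)
      = (\<Sum>k\<in>Idx2 d. \<Sum>l\<in>Idx2 d. if l = k \<or> l = prod.swap k then ?g k l else 0)"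
    by (rule sum.swap)
  also have "\<dots> = (\<Sum>k\<in>Idx2 d. ?g k k + ?g k (prod.swap k) - (if prod.swap k = k then ?g k k else 0))"
    by (intro sum.cong refl sum_if_eq_or_eq) auto
  also have "\<dots> = (\<Sum>k\<in>Idx2 d. ?g k k) + (\<Sum>k\<in>Idx2 d. ?g k (prod.swap k))
      - (\<Sum>k\<in>Idx2 d. if prod.swap k = k then ?g k k else 0)"
    by (simp add: sum.distrib sum_subtractf)
  also have "(\<Sum>k\<in>Idx2 d. ?g k k)
      = (\<Sum>i\<in>Idx d. omega_int d (i * (a1 - b1))) * (\<Sum>j\<in>Idx d. omega_int d (j * (a2 - b2)))"
    unfolding sum_Idx2 sum_product omega_int_add by (simp add: algebra_simps)
  also have "(\<Sum>k\<in>Idx2 d. ?g k (prod.swap k))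
      = (\<Sum>i\<in>Idx d. omega_int d (i * (a1 - b2))) * (\<Sum>j\<in>Idx d. omega_int d (j * (a2 - b1)))"
    unfolding sum_Idx2 sum_product omega_int_add by (simp add: algebra_simps)
  also have "(\<Sum>k\<in>Idx2 d. if prod.swap k = k then ?g k k else 0)
      = (\<Sum>i\<in>Idx d. omega_int d (i * (a1 + a2 - b1 - b2)))"
  proof -
    have "(\<Sum>k\<in>Idx2 d. if prod.swap k = k then ?g k k else 0)
        = (\<Sum>i\<in>Idx d. \<Sum>j\<in>Idx d. if j = i then omega_int d (i * (a1 + a2 - b1 - b2)) else 0)"
      unfolding sum_Idx2 by (intro sum.cong refl) (auto simp: algebra_simps)
    then show ?thesis by simp
  qed
  finally show ?thesis
    unfolding sum_omega_int_Idx[OF assms] twirl_kernel_def by (simp add: power2_eq_square)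
qed

lemma fourier2_apply:
  assumes "x \<in> Idx2 d" "k \<in> Idx2 d"
  shows "fourier2 d x k = omega_int d (fst k * fst x + snd k * snd x) / of_nat d"
proof -
  have "complex_of_real (sqrt (real d)) * complex_of_real (sqrt (real d)) = of_nat d"
    unfolding of_real_mult[symmetric] by simp
  then have "fourier2 d x k = omega_int d (fst k * fst x) * omega_int d (snd k * snd x) / of_nat d"
    using assms by (auto simp: tens_def fourier_def Idx2_def fket_def omega_int_def)
  then show ?thesis by (simp add: omega_int_add)
qed

lemma adj_fourier2_apply:
  assumes "x \<in> Idx2 d" "k \<in> Idx2 d"
  shows "adj (fourier2 d) k x = omega_int d (- (fst k * fst x + snd k * snd x)) / of_nat d"
  unfolding adj_def fourier2_apply[OF assms] by (simp add: omega_int_cnj)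

lemma sum_nested4_reorder:
  "(\<Sum>l\<in>A. \<Sum>k\<in>A. \<Sum>z\<in>A. \<Sum>w\<in>A. f l k z w) = (\<Sum>w\<in>A. \<Sum>z\<in>A. \<Sum>l\<in>A. \<Sum>k\<in>A. f l k z w)"
proof -
  have "(\<Sum>l\<in>A. \<Sum>k\<in>A. \<Sum>z\<in>A. \<Sum>w\<in>A. f l k z w) = (\<Sum>l\<in>A. \<Sum>z\<in>A. \<Sum>k\<in>A. \<Sum>w\<in>A. f l k z w)"
    by (rule sum.cong[OF refl], rule sum.swap)
  also have "\<dots> = (\<Sum>z\<in>A. \<Sum>l\<in>A. \<Sum>k\<in>A. \<Sum>w\<in>A. f l k z w)"
    by (rule sum.swap)
  also have "\<dots> = (\<Sum>z\<in>A. \<Sum>l\<in>A. \<Sum>w\<in>A. \<Sum>k\<in>A. f l k z w)"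
    by (rule sum.cong[OF refl], rule sum.cong[OF refl], rule sum.swap)
  also have "\<dots> = (\<Sum>z\<in>A. \<Sum>w\<in>A. \<Sum>l\<in>A. \<Sum>k\<in>A. f l k z w)"
    by (rule sum.cong[OF refl], rule sum.swap)
  also have "\<dots> = (\<Sum>w\<in>A. \<Sum>z\<in>A. \<Sum>l\<in>A. \<Sum>k\<in>A. f l k z w)"
    by (rule sum.swap)
  finally show ?thesis .
qed

lemma fourier_conj_diag_swap_apply:
  assumes "even d" "d > 0" "x \<in> Idx2 d" "y \<in> Idx2 d"
  shows "opmul d (opmul d (fourier2 d) (diag_swap_part d (opmul d (opmul d (adj (fourier2 d)) Z) (fourier2 d))))
           (adj (fourier2 d)) x y
    = (\<Sum>w\<in>Idx2 d. \<Sum>z\<in>Idx2 d.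
         Z w z * twirl_kernel d (fst x - fst w) (snd x - snd w) (fst y - fst z) (snd y - snd z)) / (of_nat d)^4"
proof -
  let ?P = "fourier2 d" and ?Q = "adj (fourier2 d)"
  let ?W = "opmul d (opmul d ?Q Z) ?P"
  let ?phase = "\<lambda>w z k l. omega_int d (fst k * (fst x - fst w) + snd k * (snd x - snd w)
                                        - fst l * (fst y - fst z) - snd l * (snd y - snd z))"
  have entries: "?P x k * ?Q k w * ?P z l * ?Q l y = ?phase w z k l / (of_nat d)^4"
    if "w \<in> Idx2 d" "z \<in> Idx2 d" "k \<in> Idx2 d" "l \<in> Idx2 d" for w z k l
    using that assms(3,4)
    by (simp add: fourier2_apply adj_fourier2_apply omega_int_add power4_eq_xxxx algebra_simps)
  have "opmul d (opmul d ?P (diag_swap_part d ?W)) ?Q x y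
      = (\<Sum>l\<in>Idx2 d. \<Sum>k\<in>Idx2 d. ?P x k * (of_bool (l = k \<or> l = prod.swap k) * ?W k l) * ?Q l y)"
    unfolding opmul_def sum_distrib_right by (intro sum.cong refl) (auto simp: diag_swap_part_def)
  also have "\<dots> = (\<Sum>l\<in>Idx2 d. \<Sum>k\<in>Idx2 d. \<Sum>z\<in>Idx2 d. \<Sum>w\<in>Idx2 d.
      Z w z * (of_bool (l = k \<or> l = prod.swap k) * (?P x k * ?Q k w * ?P z l * ?Q l y)))"
    unfolding opmul_def sum_distrib_left sum_distrib_right by (intro sum.cong refl) (simp add: mult_ac)
  also have "\<dots> = (\<Sum>w\<in>Idx2 d. \<Sum>z\<in>Idx2 d. \<Sum>l\<in>Idx2 d. \<Sum>k\<in>Idx2 d.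
      Z w z * (of_bool (l = k \<or> l = prod.swap k) * (?P x k * ?Q k w * ?P z l * ?Q l y)))"
    by (rule sum_nested4_reorder)
  also have "\<dots> = (\<Sum>w\<in>Idx2 d. \<Sum>z\<in>Idx2 d. Z w z *
      (\<Sum>l\<in>Idx2 d. \<Sum>k\<in>Idx2 d. if l = k \<or> l = prod.swap k then ?phase w z k l else 0) / (of_nat d)^4)"
    unfolding sum_distrib_left sum_divide_distrib by (intro sum.cong refl) (simp add: entries of_bool_def)
  finally show ?thesis
    by (simp add: sum_diag_swap_omega_int[OF assms(1,2)] sum_divide_distrib)
qed

lemma Rmap_apply_kernel:
  assumes "even d" "d > 0"
  shows "Rmap d X x y = (if x \<in> Idx2 d \<and> y \<in> Idx2 d \<and> (y = x \<or> y = prod.swap x) then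
     (\<Sum>w\<in>Idx2 d. \<Sum>z\<in>Idx2 d. diag_swap_part d X w z
        * twirl_kernel d (fst x - fst w) (snd x - snd w) (fst y - fst z) (snd y - snd z)) / (of_nat d)^4
     else 0)"
  unfolding Rmap_def Gmap_eq_diag_swap_part[OF assms(2)] Gtmap_eq_fourier_conj[OF assms(2)]
  by (subst diag_swap_part_def) (auto simp: fourier_conj_diag_swap_apply[OF assms])

lemma sum_diag_swap_part_mult:
  assumes "w \<in> Idx2 d"
  shows "(\<Sum>z\<in>Idx2 d. diag_swap_part d X w z * K z)
    = X w w * K w + of_bool (fst w \<noteq> snd w) * X w (prod.swap w) * K (prod.swap w)"
proof -
  have "(\<Sum>z\<in>Idx2 d. diag_swap_part d X w z * K z)
      = (\<Sum>z\<in>Idx2 d. if z = w \<or> z = prod.swap w then X w z * K z else 0)"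
    using assms by (intro sum.cong refl) (simp add: diag_swap_part_def)
  also have "\<dots> = X w w * K w + X w (prod.swap w) * K (prod.swap w)
      - (if prod.swap w = w then X w w * K w else 0)"
    using assms by (intro sum_if_eq_or_eq) simp_all
  finally show ?thesis
    using swap_eq_self_iff(1)[of w] by (cases "fst w = snd w") simp_all
qed

lemma twirl_kernel_balanced:
  assumes "a1 + a2 = b1 + b2"
  shows "twirl_kernel d a1 a2 b1 b2
    = (of_nat d)^2 * (of_bool (int d dvd a1 - b1) + of_bool (int d dvd a1 - b2)) - of_nat d"
proof -
  have "a2 - b2 = - (a1 - b1)" "a2 - b1 = - (a1 - b2)" "a1 + a2 - b1 - b2 = 0"
    using assms by linarith+
  then show ?thesis
    unfolding twirl_kernel_def by (simp only: dvd_minus_iff dvd_0_right) (simp add: algebra_simps)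
qed

lemma twirl_kernel_diag_swap_values:
  assumes "even d" "x \<in> Idx2 d" "w \<in> Idx2 d"
  shows "twirl_kernel d (fst x - fst w) (snd x - snd w) (fst x - fst w) (snd x - snd w)
      = (of_nat d)^2 * (1 + of_bool (int d dvd (fst x - fst w) - (snd x - snd w))) - of_nat d"
    "twirl_kernel d (fst x - fst w) (snd x - snd w) (fst x - snd w) (snd x - fst w)
      = (of_nat d)^2 * (of_bool (fst w = snd w) + of_bool (fst x = snd x)) - of_nat d"
    "twirl_kernel d (fst x - fst w) (snd x - snd w) (snd x - fst w) (fst x - snd w)
      = (of_nat d)^2 * (of_bool (fst x = snd x) + of_bool (fst w = snd w)) - of_nat d"
    "twirl_kernel d (fst x - fst w) (snd x - snd w) (snd x - snd w) (fst x - fst w)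
      = (of_nat d)^2 * (of_bool (int d dvd (fst x - fst w) - (snd x - snd w)) + 1) - of_nat d"
  using assms by (simp_all add: twirl_kernel_balanced dvd_diff_Idx_iff Idx2_def mem_Times_iff)

lemma Rmap_apply_outside:
  assumes "even d" "d > 0" "\<not> (x \<in> Idx2 d \<and> y \<in> Idx2 d \<and> (y = x \<or> y = prod.swap x))"
  shows "Rmap d X x y = 0"
  unfolding Rmap_apply_kernel[OF assms(1,2)] using assms(3) by (rule if_not_P)

lemma Rmap_apply_diag_swap:
  assumes "even d" "d > 0" "x \<in> Idx2 d" "y \<in> Idx2 d" "y = x \<or> y = prod.swap x"
  shows "Rmap d X x y = (\<Sum>w\<in>Idx2 d.
      X w w * twirl_kernel d (fst x - fst w) (snd x - snd w) (fst y - fst w) (snd y - snd w)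
    + of_bool (fst w \<noteq> snd w) * X w (prod.swap w)
        * twirl_kernel d (fst x - fst w) (snd x - snd w) (fst y - snd w) (snd y - fst w)) / (of_nat d)^4"
proof -
  have "Rmap d X x y = (\<Sum>w\<in>Idx2 d. \<Sum>z\<in>Idx2 d. diag_swap_part d X w z
        * twirl_kernel d (fst x - fst w) (snd x - snd w) (fst y - fst z) (snd y - snd z)) / (of_nat d)^4"
    using assms by (simp only: Rmap_apply_kernel if_True simp_thms)
  then show ?thesis
    by (simp only: sum_diag_swap_part_mult fst_swap snd_swap cong: sum.cong)
qed

lemma Rmap_apply_diag:
  assumes "even d" "d > 0" "x \<in> Idx2 d"
  shows "Rmap d X x x =
      of_bool (fst x \<noteq> snd x)
        * (\<Sum>i\<in>Idx d. X (i, wrap d (i + (snd x - fst x))) (i, wrap d (i + (snd x - fst x)))) / (of_nat d)^2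
    + (\<Sum>i\<in>Idx d. X (i, i) (i, i)) / (of_nat d)^3
    + (1 / (of_nat d)^2 - 1 / (of_nat d)^3) * tr d X
    + (of_bool (fst x = snd x) / (of_nat d)^2 - 1 / (of_nat d)^3) * tr d (opmul d (Fop d) X)"
proof -
  let ?c = "of_nat d :: complex"
  define D where "D w \<longleftrightarrow> int d dvd (fst x - fst w) - (snd x - snd w)" for w
  have x: "fst x \<in> Idx d" "snd x \<in> Idx d"
    using assms(3) by (auto simp: Idx2_def)
  have shifted: "(\<Sum>i\<in>Idx d. X (i, wrap d (i + (snd x - fst x))) (i, wrap d (i + (snd x - fst x))))
      = (\<Sum>w\<in>Idx2 d. if D w then X w w else 0)"
    unfolding sum_Idx_wrap_eq_sum_Idx2[OF assms(1,2), where f = "\<lambda>w. X w w"] D_def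
    by (intro sum.cong refl) (simp add: algebra_simps)
  have summand: "(X w w * (?c^2 * (1 + of_bool (D w)) - ?c)
        + of_bool (fst w \<noteq> snd w) * X w (prod.swap w) * (?c^2 * (of_bool (fst w = snd w) + of_bool (fst x = snd x)) - ?c))
        / ?c^4
      = of_bool (fst x \<noteq> snd x) * (if D w then X w w else 0) / ?c^2 + (if fst w = snd w then X w w else 0) / ?c^3
        + (1 / ?c^2 - 1 / ?c^3) * X w w + (of_bool (fst x = snd x) / ?c^2 - 1 / ?c^3) * X w (prod.swap w)"
    if "w \<in> Idx2 d" for w
  proof -
    have "fst x = snd x \<Longrightarrow> D w \<longleftrightarrow> fst w = snd w"
      using that x by (auto simp: D_def Idx2_def dvd_diff_Idx_iff[OF assms(1)])
    moreover have "fst w = snd w \<Longrightarrow> prod.swap w = w"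
      by (cases w) auto
    moreover have "?c \<noteq> 0"
      using assms(2) by simp
    ultimately show ?thesis
      by (cases "fst x = snd x"; cases "fst w = snd w"; cases "D w")
         (simp_all add: field_simps power2_eq_square power3_eq_cube power4_eq_xxxx)
  qed
  have "Rmap d X x x = (\<Sum>w\<in>Idx2 d. (X w w * (?c^2 * (1 + of_bool (D w)) - ?c)
        + of_bool (fst w \<noteq> snd w) * X w (prod.swap w) * (?c^2 * (of_bool (fst w = snd w) + of_bool (fst x = snd x)) - ?c))
        / ?c^4)"
    unfolding Rmap_apply_diag_swap[OF assms(1,2,3,3) disjI1[OF refl]] sum_divide_distrib
    by (simp add: twirl_kernel_diag_swap_values[OF assms(1,3)] D_def cong: sum.cong)
  also have "\<dots> = (\<Sum>w\<in>Idx2 d. of_bool (fst x \<noteq> snd x) * (if D w then X w w else 0) / ?c^2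
        + (if fst w = snd w then X w w else 0) / ?c^3
        + (1 / ?c^2 - 1 / ?c^3) * X w w + (of_bool (fst x = snd x) / ?c^2 - 1 / ?c^3) * X w (prod.swap w))"
    by (intro sum.cong refl summand)
  finally show ?thesis
    unfolding shifted sum_Idx_diagonal[where f = "\<lambda>w. X w w"] tr_Fop_mult unfolding tr_def
    by (simp add: sum.distrib sum_distrib_left sum_divide_distrib)
qed

lemma Rmap_apply_swap:
  assumes "even d" "d > 0" "x \<in> Idx2 d" "fst x \<noteq> snd x"
  shows "Rmap d X x (prod.swap x) =
      (\<Sum>i\<in>Idx d. X (i, wrap d (i + (snd x - fst x))) (wrap d (i + (snd x - fst x)), i)) / (of_nat d)^2
    + (\<Sum>i\<in>Idx d. X (i, i) (i, i)) / (of_nat d)^3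
    - tr d X / (of_nat d)^3
    + (1 / (of_nat d)^2 - 1 / (of_nat d)^3) * tr d (opmul d (Fop d) X)"
proof -
  let ?c = "of_nat d :: complex"
  define D where "D w \<longleftrightarrow> int d dvd (fst x - fst w) - (snd x - snd w)" for w
  have x: "fst x \<in> Idx d" "snd x \<in> Idx d"
    using assms(3) by (auto simp: Idx2_def)
  have shifted: "(\<Sum>i\<in>Idx d. X (i, wrap d (i + (snd x - fst x))) (wrap d (i + (snd x - fst x)), i))
      = (\<Sum>w\<in>Idx2 d. if D w then X w (prod.swap w) else 0)"
    using sum_Idx_wrap_eq_sum_Idx2[OF assms(1,2), of "\<lambda>w. X w (prod.swap w)" "snd x - fst x"]
    by (simp add: D_def algebra_simps)
  have summand: "(X w w * (?c^2 * of_bool (fst w = snd w) - ?c)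
        + of_bool (fst w \<noteq> snd w) * X w (prod.swap w) * (?c^2 * (of_bool (D w) + 1) - ?c)) / ?c^4
      = (if D w then X w (prod.swap w) else 0) / ?c^2 + (if fst w = snd w then X w w else 0) / ?c^3
        - X w w / ?c^3 + (1 / ?c^2 - 1 / ?c^3) * X w (prod.swap w)"
    if "w \<in> Idx2 d" for w
  proof -
    have "fst w = snd w \<Longrightarrow> \<not> D w"
      using that x assms(4) by (auto simp: D_def Idx2_def dvd_diff_Idx_iff[OF assms(1)])
    moreover have "fst w = snd w \<Longrightarrow> prod.swap w = w"
      by (cases w) auto
    moreover have "?c \<noteq> 0"
      using assms(2) by simp
    ultimately show ?thesis
      by (cases "fst w = snd w"; cases "D w")
         (simp_all add: field_simps power2_eq_square power3_eq_cube power4_eq_xxxx)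
  qed
  have "Rmap d X x (prod.swap x) = (\<Sum>w\<in>Idx2 d. (X w w * (?c^2 * of_bool (fst w = snd w) - ?c)
        + of_bool (fst w \<noteq> snd w) * X w (prod.swap w) * (?c^2 * (of_bool (D w) + 1) - ?c)) / ?c^4)"
    unfolding Rmap_apply_diag_swap[OF assms(1,2,3) swap_in_Idx2_iff[THEN iffD2, OF assms(3)] disjI2[OF refl]]
      sum_divide_distrib
    by (simp add: twirl_kernel_diag_swap_values[OF assms(1,3)] D_def assms(4) cong: sum.cong)
  also have "\<dots> = (\<Sum>w\<in>Idx2 d. (if D w then X w (prod.swap w) else 0) / ?c^2
        + (if fst w = snd w then X w w else 0) / ?c^3
        - X w w / ?c^3 + (1 / ?c^2 - 1 / ?c^3) * X w (prod.swap w))"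
    by (intro sum.cong refl summand)
  finally show ?thesis
    unfolding shifted sum_Idx_diagonal[where f = "\<lambda>w. X w w"] tr_Fop_mult unfolding tr_def
    by (simp add: sum.distrib sum_subtractf sum_distrib_left sum_divide_distrib)
qed

lemma Rmap_apply:
  assumes "even d" "d > 0"
  shows "Rmap d X x y =
      (\<Sum>u\<in>Idx d - {0}. (\<Sum>i\<in>Idx d. X (i, wrap d (i+u)) (i, wrap d (i+u))) * Pdiag d u x y) / (of_nat d)^2
    + (\<Sum>u\<in>Idx d - {0}. (\<Sum>i\<in>Idx d. X (i, wrap d (i+u)) (wrap d (i+u), i)) * Pswap d u x y) / (of_nat d)^2
    + (\<Sum>i\<in>Idx d. X (i,i) (i,i)) * (Iop d x y + Fop d x y - Eop d x y) / (of_nat d)^3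
    + (Iop d x y / (of_nat d)^2 - (Iop d x y + Fop d x y - Eop d x y) / (of_nat d)^3) * tr d X
    + (Fop d x y / (of_nat d)^2 - (Iop d x y + Fop d x y - Eop d x y) / (of_nat d)^3)
        * tr d (opmul d (Fop d) X)"
proof -
  consider (outside) "\<not> (x \<in> Idx2 d \<and> y \<in> Idx2 d \<and> (y = x \<or> y = prod.swap x))"
    | (diag) "x \<in> Idx2 d" "y = x"
    | (swap) "x \<in> Idx2 d" "y = prod.swap x" "fst x \<noteq> snd x"
    by (cases x) auto
  then show ?thesis
  proof cases
    case outside
    then have "Pdiag d u x y = 0" "Pswap d u x y = 0" for u
      using mem_Idx2_if_snd_eq_wrap[OF assms, of x] by (auto simp: Pdiag_apply Pswap_apply)
    moreover have "Iop d x y = 0" "Fop d x y = 0" "Eop d x y = 0"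
      using outside by (auto simp: Iop_apply Fop_apply Eop_apply)
    ultimately show ?thesis
      using Rmap_apply_outside[OF assms outside] by simp
  next
    case diag
    then show ?thesis
      using Rmap_apply_diag[OF assms diag(1)]
      by (simp add: sum_mult_Pdiag[OF assms diag(1)] sum_mult_Pswap[OF assms diag(1)] wrap_add_wrap
          Iop_apply Fop_apply Eop_apply swap_eq_self_iff)
  next
    case swap
    then show ?thesis
      using Rmap_apply_swap[OF assms swap(1,3)]
      by (simp add: sum_mult_Pdiag[OF assms swap(1)] sum_mult_Pswap[OF assms swap(1)] wrap_add_wrap
          Iop_apply Fop_apply Eop_apply swap_eq_self_iff diff_divide_distrib)
  qed
qed

lemma Rmap_apply_orthogonal:
  assumes "even d" "d > 0" "inK d X"
  shows "Rmap d X x y =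
      (\<Sum>u\<in>Idx d - {0}. ((\<Sum>i\<in>Idx d. X (i, wrap d (i+u)) (i, wrap d (i+u))) / (of_nat d)^2
          + (\<Sum>i\<in>Idx d. X (i,i) (i,i)) / (of_nat d)^3) * Pdiag d u x y)
    + (\<Sum>u\<in>Idx d - {0}. ((\<Sum>i\<in>Idx d. X (i, wrap d (i+u)) (wrap d (i+u), i)) / (of_nat d)^2
          + (\<Sum>i\<in>Idx d. X (i,i) (i,i)) / (of_nat d)^3) * Pswap d u x y)
    + (\<Sum>i\<in>Idx d. X (i,i) (i,i)) / (of_nat d)^3 * Eop d x y"
proof -
  have "tr d X = 0" "tr d (opmul d (Fop d) X) = 0"
    using assms(3) by (simp_all add: inK_def hs_Iop hs_Fop)
  then show ?thesis
    unfolding Rmap_apply[OF assms(1,2)] sum_Pdiag_Pswap_Eop[OF assms(1,2), symmetric]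
    by (simp add: distrib_left distrib_right sum.distrib sum_distrib_left sum_distrib_right sum_divide_distrib
        add_divide_distrib)
qed

theorem corollary2:
  fixes d :: nat and X :: op2
  assumes "even d" and "d \<ge> 2" and "is_op d X"
  shows "(Rmap d X = (\<lambda>x y.
      (\<Sum>u\<in>Idx d - {0}. (\<Sum>i\<in>Idx d. X (i, wrap d (i+u)) (i, wrap d (i+u))) * Pdiag d u x y) / (of_nat d)^2
    + (\<Sum>u\<in>Idx d - {0}. (\<Sum>i\<in>Idx d. X (i, wrap d (i+u)) (wrap d (i+u), i)) * Pswap d u x y) / (of_nat d)^2
    + (\<Sum>i\<in>Idx d. X (i,i) (i,i)) * (Iop d x y + Fop d x y - Eop d x y) / (of_nat d)^3
    + (Iop d x y / (of_nat d)^2 - (Iop d x y + Fop d x y - Eop d x y) / (of_nat d)^3) * tr d X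
    + (Fop d x y / (of_nat d)^2 - (Iop d x y + Fop d x y - Eop d x y) / (of_nat d)^3)
        * tr d (opmul d (Fop d) X)))
    \<and> (inK d X \<longrightarrow> Rmap d X = (\<lambda>x y.
      (\<Sum>u\<in>Idx d - {0}. ((\<Sum>i\<in>Idx d. X (i, wrap d (i+u)) (i, wrap d (i+u))) / (of_nat d)^2
          + (\<Sum>i\<in>Idx d. X (i,i) (i,i)) / (of_nat d)^3) * Pdiag d u x y)
    + (\<Sum>u\<in>Idx d - {0}. ((\<Sum>i\<in>Idx d. X (i, wrap d (i+u)) (wrap d (i+u), i)) / (of_nat d)^2
          + (\<Sum>i\<in>Idx d. X (i,i) (i,i)) / (of_nat d)^3) * Pswap d u x y)
    + (\<Sum>i\<in>Idx d. X (i,i) (i,i)) / (of_nat d)^3 * Eop d x y))"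
proof -
  have "d > 0"
    using assms(2) by simp
  then show ?thesis
    by (intro conjI impI ext Rmap_apply[OF assms(1)] Rmap_apply_orthogonal[OF assms(1)])
qed

end
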